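(* Let $P$ be a finite lattice and $f,g\in\mathcal{L}_P$. If $w\in\mathcal{L}_P$ is prime and $w\le f+g$, then there exist prime $u,v\in\mathcal{L}_P$ with $u\le f$, $v\le g$ and $w\le u+v$.
   Context: $P$ is a finite lattice. $\mathcal{L}_P$ is the set of maps $f:P\to P$ satisfying (A.1) $a\le f(a)$; (A.2) $a\le b\Rightarrow f(a)\le f(b)$; (A.3) $f(f(a))=f(a)$, ordered pointwise ($f\le g$ iff $f(a)\le g(a)$ for all $a$); it is a lattice with join $+$. $\Phi f=\{a:f(a)=a\}$. $f$ is prime if $P\setminus\Phi f$ is closed under $\wedge$. *)

theory Defs
  imports Main
begin

text \<open>The finite lattice P is modelled as a type of class finite + lattice.
  Elements of L_P are closure operators; the order on maps is the pointwise
  order (le_fun).\<close>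

definition closure_op :: "('a::lattice \<Rightarrow> 'a) \<Rightarrow> bool" where
  "closure_op f \<longleftrightarrow> (\<forall>a. a \<le> f a) \<and> (\<forall>a b. a \<le> b \<longrightarrow> f a \<le> f b) \<and> (\<forall>a. f (f a) = f a)"

definition Fix :: "('a \<Rightarrow> 'a) \<Rightarrow> 'a set" where
  "Fix f = {a. f a = a}"

definition cjoin :: "('a::lattice \<Rightarrow> 'a) \<Rightarrow> ('a \<Rightarrow> 'a) \<Rightarrow> ('a \<Rightarrow> 'a)" (infixl "+\<^sub>L" 65) where
  "cjoin f g = (THE h. closure_op h \<and> f \<le> h \<and> g \<le> h \<and>
      (\<forall>k. closure_op k \<and> f \<le> k \<and> g \<le> k \<longrightarrow> h \<le> k))"

definition prime_op :: "('a::lattice \<Rightarrow> 'a) \<Rightarrow> bool" where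
  "prime_op f \<longleftrightarrow> (\<forall>a\<in>UNIV - Fix f. \<forall>b\<in>UNIV - Fix f. inf a b \<in> UNIV - Fix f)"

end

theory Submission
  imports Defs
begin

text \<open>Closure operators on a finite lattice correspond to their sets of fixed points, the
  meet-closed subsets containing the top element; the order is reversed and the join
  corresponds to intersection. A monotone chain \<open>s\<close> determines a prime operator below a
  closure operator \<open>f\<close>: its non-fixed points are those \<open>x\<close> that lie above some \<open>s n\<close> but
  not above \<open>f (s n)\<close>; on a chain this set and its complement are both meet-closed.
  So it suffices to find one chain such that every non-fixed point of \<open>w\<close> is escaped in
  this way through \<open>f\<close> or through \<open>g\<close>. Such a chain is obtained by iterating, from the
  bottom, the map that applies \<open>f\<close> or \<open>g\<close> where they move the point and otherwise jumps
  to the least non-fixed point of \<open>w\<close> above it (or to the top if there is none); primality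
  of \<open>w\<close> makes that point exist, and \<open>Fix f \<inter> Fix g \<subseteq> Fix w\<close> makes the iteration escape below every non-fixed point.\<close>

definition top_elem :: "'a::{finite,lattice}" where
  "top_elem = Sup_fin UNIV"

lemma le_top_elem: "(x::'a::{finite,lattice}) \<le> top_elem"
  unfolding top_elem_def by (rule Sup_fin.coboundedI) auto

definition meet_closed :: "'a::lattice set \<Rightarrow> bool" where
  "meet_closed S \<longleftrightarrow> (\<forall>a\<in>S. \<forall>b\<in>S. inf a b \<in> S)"

lemma meet_closed_Int: "meet_closed A \<Longrightarrow> meet_closed B \<Longrightarrow> meet_closed (A \<inter> B)"
  unfolding meet_closed_def by auto

lemma meet_closed_insert_top:
  "meet_closed C \<Longrightarrow> meet_closed (insert top_elem C)"
  unfolding meet_closed_def by (auto simp: inf_absorb1 inf_absorb2 le_top_elem)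

lemma Inf_fin_mem_meet_closed:
  assumes "finite A" "A \<noteq> {}" "A \<subseteq> S" "meet_closed S"
  shows "Inf_fin A \<in> (S::'a::lattice set)"
  using assms(1-3)
proof (induction A rule: finite_ne_induct)
  case (insert x F)
  then show ?case using assms(4) unfolding meet_closed_def by simp
qed simp

lemma prime_op_iff: "prime_op f \<longleftrightarrow> meet_closed (- Fix f)"
  unfolding prime_op_def meet_closed_def by auto

definition moore_closure :: "'a::{finite,lattice} set \<Rightarrow> 'a \<Rightarrow> 'a" where
  "moore_closure M x = Inf_fin {z\<in>M. x \<le> z}"

context
  fixes M :: "'a::{finite,lattice} set"
  assumes meet_closed: "meet_closed M" and top_mem: "top_elem \<in> M"
begin

lemma moore_closure_set_nonempty: "{z\<in>M. x \<le> z} \<noteq> {}"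
  using top_mem le_top_elem by blast

lemma moore_closure_mem: "moore_closure M x \<in> M"
  unfolding moore_closure_def
  by (rule Inf_fin_mem_meet_closed[OF _ moore_closure_set_nonempty _ meet_closed]) auto

lemma moore_closure_upper: "x \<le> moore_closure M x"
  unfolding moore_closure_def
  by (rule Inf_fin.boundedI) (use moore_closure_set_nonempty in auto)

lemma moore_closure_least: "z \<in> M \<Longrightarrow> x \<le> z \<Longrightarrow> moore_closure M x \<le> z"
  unfolding moore_closure_def by (rule Inf_fin.coboundedI) simp_all

lemma moore_closure_eq: "z \<in> M \<Longrightarrow> moore_closure M z = z"
  by (intro antisym moore_closure_least moore_closure_upper order_refl)

lemma closure_op_moore_closure: "closure_op (moore_closure M)"
  unfolding closure_op_def
proof (intro conjI allI impI)
  fix a b :: 'a assume "a \<le> b"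
  then show "moore_closure M a \<le> moore_closure M b"
    using moore_closure_least[OF moore_closure_mem] moore_closure_upper order_trans by blast
qed (simp_all add: moore_closure_upper moore_closure_eq moore_closure_mem)

lemma Fix_moore_closure: "Fix (moore_closure M) = M"
  unfolding Fix_def by (metis (mono_tags) moore_closure_mem moore_closure_eq subset_antisym subsetI mem_Collect_eq)

end

lemma closure_op_inflationary: "closure_op f \<Longrightarrow> x \<le> f x"
  unfolding closure_op_def by blast

lemma closure_op_mono: "closure_op f \<Longrightarrow> x \<le> y \<Longrightarrow> f x \<le> f y"
  unfolding closure_op_def by blast

lemma closure_op_idem: "closure_op f \<Longrightarrow> f (f x) = f x"
  unfolding closure_op_def by blast

lemma Fix_meet_closed:
  assumes "closure_op h" shows "meet_closed (Fix h)"
  unfolding meet_closed_def Fix_def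
proof (intro ballI)
  fix a b assume "a \<in> {a. h a = a}" "b \<in> {a. h a = a}"
  moreover have "h (inf a b) \<le> h a" "h (inf a b) \<le> h b"
    by (simp_all add: closure_op_mono[OF assms])
  ultimately have "h (inf a b) \<le> a" "h (inf a b) \<le> b" by simp_all
  then have "h (inf a b) \<le> inf a b" by simp
  then have "h (inf a b) = inf a b"
    using closure_op_inflationary[OF assms, of "inf a b"] by (rule antisym)
  then show "inf a b \<in> {a. h a = a}" by simp
qed

lemma top_elem_mem_Fix:
  assumes "closure_op h" shows "top_elem \<in> Fix h"
  unfolding Fix_def by (simp add: antisym le_top_elem closure_op_inflationary[OF assms])

lemma closure_op_le_iff_Fix_subset:
  assumes h: "closure_op h" and k: "closure_op k"
  shows "h \<le> k \<longleftrightarrow> Fix k \<subseteq> Fix (h::'a::lattice \<Rightarrow> 'a)"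
proof
  assume "h \<le> k"
  show "Fix k \<subseteq> Fix h"
  proof
    fix z assume "z \<in> Fix k"
    then have "k z = z" by (simp add: Fix_def)
    moreover have "h z \<le> k z" using \<open>h \<le> k\<close> by (rule le_funD)
    ultimately have "h z \<le> z" by simp
    then have "h z = z" using closure_op_inflationary[OF h, of z] by (rule antisym)
    then show "z \<in> Fix h" unfolding Fix_def by simp
  qed
next
  assume F: "Fix k \<subseteq> Fix h"
  show "h \<le> k" unfolding le_fun_def
  proof
    fix x
    have "h (k x) = k x" using F closure_op_idem[OF k] unfolding Fix_def by blast
    then show "h x \<le> k x" using closure_op_mono[OF h closure_op_inflationary[OF k], of x] by simp
  qed
qed

lemma cjoin_eq_moore_closure:
  fixes f g :: "'a::{finite,lattice} \<Rightarrow> 'a"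
  assumes f: "closure_op f" and g: "closure_op g"
  shows "f +\<^sub>L g = moore_closure (Fix f \<inter> Fix g)"
proof -
  let ?M = "Fix f \<inter> Fix g"
  have mc: "meet_closed ?M" by (intro meet_closed_Int Fix_meet_closed f g)
  have tp: "top_elem \<in> ?M" using top_elem_mem_Fix f g by blast
  note cl = closure_op_moore_closure[OF mc tp] and FX = Fix_moore_closure[OF mc tp]
  have upper: "f \<le> moore_closure ?M" "g \<le> moore_closure ?M"
    using closure_op_le_iff_Fix_subset[OF f cl] closure_op_le_iff_Fix_subset[OF g cl] FX by auto
  have least: "moore_closure ?M \<le> k" if "closure_op k" "f \<le> k" "g \<le> k" for k
    using that closure_op_le_iff_Fix_subset[OF f] closure_op_le_iff_Fix_subset[OF g]
      closure_op_le_iff_Fix_subset[OF cl] FX by auto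
  show ?thesis unfolding cjoin_def
    by (rule the_equality) (use cl upper least in \<open>blast intro: antisym\<close>)+
qed

lemma le_cjoin_iff:
  fixes f g w :: "'a::{finite,lattice} \<Rightarrow> 'a"
  assumes "closure_op f" "closure_op g" "closure_op w"
  shows "w \<le> f +\<^sub>L g \<longleftrightarrow> Fix f \<inter> Fix g \<subseteq> Fix w"
proof -
  have mc: "meet_closed (Fix f \<inter> Fix g)" by (intro meet_closed_Int Fix_meet_closed assms(1,2))
  have tp: "top_elem \<in> Fix f \<inter> Fix g" using top_elem_mem_Fix assms(1,2) by blast
  show ?thesis
    using closure_op_le_iff_Fix_subset[OF assms(3) closure_op_moore_closure[OF mc tp]]
    by (simp add: cjoin_eq_moore_closure assms(1,2) Fix_moore_closure[OF mc tp])
qed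

definition escape_set :: "('a::lattice \<Rightarrow> 'a) \<Rightarrow> (nat \<Rightarrow> 'a) \<Rightarrow> 'a set" where
  "escape_set f s = {x. \<exists>n. s n \<le> x \<and> \<not> f (s n) \<le> x}"

lemma meet_closed_escape_set:
  assumes "mono s" shows "meet_closed (escape_set f s)"
  unfolding meet_closed_def
proof (intro ballI)
  fix a b assume "a \<in> escape_set f s" "b \<in> escape_set f s"
  then obtain m n where m: "s m \<le> a" "\<not> f (s m) \<le> a" and n: "s n \<le> b" "\<not> f (s n) \<le> b"
    unfolding escape_set_def by blast
  have "s m \<le> s n \<or> s n \<le> s m"
    using assms nat_le_linear unfolding mono_def by blast
  then have "s m \<le> inf a b \<or> s n \<le> inf a b"
    using m(1) n(1) order_trans le_inf_iff by blast
  then show "inf a b \<in> escape_set f s"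
    using m(2) n(2) unfolding escape_set_def by auto
qed

lemma meet_closed_Compl_escape_set: "meet_closed (- escape_set f s)"
  unfolding meet_closed_def escape_set_def by (simp add: le_inf_iff)

lemma Fix_disjoint_escape_set:
  assumes "closure_op f" shows "Fix f \<inter> escape_set f s = {}"
proof -
  have "f y \<le> x" if "f x = x" "y \<le> x" for x y
    using closure_op_mono[OF assms that(2)] that(1) by simp
  then show ?thesis unfolding Fix_def escape_set_def by blast
qed

lemma prime_closure_op_from_chain:
  fixes f :: "'a::{finite,lattice} \<Rightarrow> 'a"
  assumes f: "closure_op f" and s: "mono s"
  shows "\<exists>u. closure_op u \<and> prime_op u \<and> u \<le> f \<and> Fix u = - escape_set f s"
proof -
  let ?M = "- escape_set f s"
  have mc: "meet_closed ?M" by (rule meet_closed_Compl_escape_set)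
  have tp: "top_elem \<in> ?M" using Fix_disjoint_escape_set[OF f] top_elem_mem_Fix[OF f] by blast
  let ?u = "moore_closure ?M"
  have "prime_op ?u"
    by (simp add: prime_op_iff Fix_moore_closure[OF mc tp] meet_closed_escape_set[OF s])
  moreover have "?u \<le> f"
    using Fix_disjoint_escape_set[OF f]
    by (auto simp: closure_op_le_iff_Fix_subset[OF closure_op_moore_closure[OF mc tp] f]
          Fix_moore_closure[OF mc tp])
  ultimately show ?thesis using closure_op_moore_closure[OF mc tp] Fix_moore_closure[OF mc tp]
    by blast
qed

text \<open>If the iterates of an inflationary map stayed below \<open>x\<close> forever, then, the order being
  finite, two of them would coincide and the chain would be stuck at a fixed point below \<open>x\<close>.\<close>

lemma inflationary_iterate_escapes:
  fixes k :: "'a::{finite,order} \<Rightarrow> 'a"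
  assumes infl: "\<And>y. y \<le> k y" and "a \<le> x" and no_fix: "\<And>y. k y = y \<Longrightarrow> \<not> y \<le> x"
  shows "\<exists>n. (k ^^ n) a \<le> x \<and> \<not> k ((k ^^ n) a) \<le> x"
proof (rule ccontr)
  define s where "s n = (k ^^ n) a" for n
  have s_Suc: "s (Suc n) = k (s n)" for n unfolding s_def by simp
  assume "\<not> ?thesis"
  then have below: "s n \<le> x" for n
    by (induction n) (use \<open>a \<le> x\<close> s_Suc in \<open>auto simp: s_def\<close>)
  have "\<not> inj s"
    using finite_imageD[of s UNIV] by auto
  then obtain m n where "m < n" "s m = s n"
    unfolding inj_def by (metis linorder_neq_iff)
  moreover have "s (Suc m) \<le> s n" if "m < n"
    using lift_Suc_mono_le[of s "Suc m" n] infl s_Suc that by simp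
  ultimately have "k (s m) = s m"
    by (metis infl s_Suc order_antisym)
  then show False using no_fix below by blast
qed

lemma exists_escaping_chain:
  fixes f g :: "'a::{finite,lattice} \<Rightarrow> 'a" and C :: "'a set"
  assumes f: "closure_op f" and g: "closure_op g"
    and C: "meet_closed C" and disjoint: "Fix f \<inter> Fix g \<inter> C = {}"
  shows "\<exists>s :: nat \<Rightarrow> 'a. mono s \<and> (\<forall>x\<in>C. \<exists>n. s n \<le> x \<and> (\<not> f (s n) \<le> x \<or> \<not> g (s n) \<le> x))"
proof -
  let ?M = "insert top_elem C"
  have mc: "meet_closed ?M" by (rule meet_closed_insert_top[OF C])
  have tp: "top_elem \<in> ?M" by simp
  define h where "h y = (if f y \<noteq> y then f y else if g y \<noteq> y then g y
      else moore_closure ?M y)" for y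
  have infl: "y \<le> h y" for y
    using f g moore_closure_upper[OF mc tp] unfolding h_def closure_op_def by simp
  define s where "s n = (h ^^ n) (Inf_fin UNIV)" for n
  have "mono s"
    unfolding mono_iff_le_Suc s_def using infl by simp
  moreover have "\<exists>n. s n \<le> x \<and> (\<not> f (s n) \<le> x \<or> \<not> g (s n) \<le> x)" if x: "x \<in> C" for x
  proof -
    have "top_elem \<notin> C" using disjoint top_elem_mem_Fix f g by blast
    have no_fix: "\<not> y \<le> x" if "h y = y" for y
    proof
      assume "y \<le> x"
      have "f y = y" "g y = y" using that by (simp_all add: h_def split: if_splits)
      then have "moore_closure ?M y = y" using that by (simp add: h_def)
      then have "y \<in> ?M" using moore_closure_mem[OF mc tp, of y] by simp
      with \<open>f y = y\<close> \<open>g y = y\<close> have "y = top_elem" using disjoint by (auto simp: Fix_def)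
      then show False using \<open>y \<le> x\<close> x \<open>top_elem \<notin> C\<close> le_top_elem antisym by metis
    qed
    have "Inf_fin UNIV \<le> x" by (rule Inf_fin.coboundedI) simp_all
    then obtain n where n: "s n \<le> x" "\<not> h (s n) \<le> x"
      using inflationary_iterate_escapes[OF infl _ no_fix] unfolding s_def by blast
    moreover have "moore_closure ?M (s n) \<le> x"
      using moore_closure_least[OF mc tp] x n(1) by simp
    ultimately show ?thesis by (auto simp: h_def split: if_splits)
  qed
  ultimately show ?thesis by blast
qed

theorem mainTheorem18:
  fixes f g w :: "'a::{finite,lattice} \<Rightarrow> 'a"
  assumes "closure_op f" and "closure_op g" and "closure_op w"
    and "prime_op w" and "w \<le> f +\<^sub>L g"
  shows "\<exists>u v. closure_op u \<and> closure_op v \<and> prime_op u \<and> prime_op v \<and>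
           u \<le> f \<and> v \<le> g \<and> w \<le> u +\<^sub>L v"
proof -
  have "Fix f \<inter> Fix g \<inter> - Fix w = {}"
    using assms(5) le_cjoin_iff[OF assms(1-3)] by blast
  moreover have "meet_closed (- Fix w)" using assms(4) by (simp add: prime_op_iff)
  ultimately obtain s :: "nat \<Rightarrow> 'a" where "mono s"
    and escape: "\<forall>x\<in>- Fix w. \<exists>n. s n \<le> x \<and> (\<not> f (s n) \<le> x \<or> \<not> g (s n) \<le> x)"
    using exists_escaping_chain[OF assms(1,2)] by blast
  obtain u where u: "closure_op u" "prime_op u" "u \<le> f" "Fix u = - escape_set f s"
    using prime_closure_op_from_chain[OF assms(1) \<open>mono s\<close>] by blast
  obtain v where v: "closure_op v" "prime_op v" "v \<le> g" "Fix v = - escape_set g s"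
    using prime_closure_op_from_chain[OF assms(2) \<open>mono s\<close>] by blast
  have "Fix u \<inter> Fix v \<subseteq> Fix w"
    using escape u(4) v(4) unfolding escape_set_def by blast
  then have "w \<le> u +\<^sub>L v"
    using le_cjoin_iff[OF u(1) v(1) assms(3)] by blast
  with u v show ?thesis by blast
qed

end
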